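(* Let $n\ge1$ be an integer. There exists a constant $c_1=c_1(n)>0$ such that for all pairwise distinct points $z_1,z_2,z_3\in\mathbb{R}^2$, $$p_1(z_1,z_2,z_3)+p_2(z_1,z_2,z_3)\ge c_1\,c(z_1,z_2,z_3)^2.$$
   Context: For $i=1,2$ and $x\in\mathbb{R}^2\setminus\{0\}$, $K_i(x)=x_i^{2n-1}/|x|^{2n}$, and $p_i(z_1,z_2,z_3)=K_i(z_1-z_2)K_i(z_1-z_3)+K_i(z_2-z_1)K_i(z_2-z_3)+K_i(z_3-z_1)K_i(z_3-z_2)$. The Menger curvature $c(z_1,z_2,z_3)$ is the inverse of the radius of the circle through $z_1,z_2,z_3$ (equal to $0$ if the points are collinear). *)

theory Defs
  imports "HOL-Analysis.Analysis"
begin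

definition Kern :: "nat \<Rightarrow> 2 \<Rightarrow> real^2 \<Rightarrow> real" where
  "Kern n i x = (x $ i) ^ (2*n - 1) / (norm x) ^ (2*n)"

definition pK :: "nat \<Rightarrow> 2 \<Rightarrow> real^2 \<Rightarrow> real^2 \<Rightarrow> real^2 \<Rightarrow> real" where
  "pK n i z1 z2 z3 =
     Kern n i (z1 - z2) * Kern n i (z1 - z3)
   + Kern n i (z2 - z1) * Kern n i (z2 - z3)
   + Kern n i (z3 - z1) * Kern n i (z3 - z2)"

definition menger_curv :: "real^2 \<Rightarrow> real^2 \<Rightarrow> real^2 \<Rightarrow> real" where
  "menger_curv z1 z2 z3 =
     (if collinear {z1, z2, z3} then 0
      else 1 / (THE r. \<exists>w. dist w z1 = r \<and> dist w z2 = r \<and> dist w z3 = r))"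

end

theory Submission
  imports Defs
begin

text \<open>Write \<open>u = z1 - z2\<close>, \<open>v = z2 - z3\<close>, \<open>w = z3 - z1\<close>, so \<open>u + v + w = 0\<close>. Since \<open>K_i\<close> is odd,
  \<open>p_i = - (K_i u K_i v + K_i v K_i w + K_i w K_i u)\<close>, which is invariant under permutations of
  \<open>u, v, w\<close> and under \<open>u, v, w \<mapsto> -u, -v, -w\<close>. Two of the three \<open>i\<close>-th components have the
  same sign, so we may assume \<open>u_i, v_i \<ge> 0\<close> and \<open>v_i / |v| \<le> u_i / |u|\<close>. With \<open>m = 2n - 1\<close> and
  \<open>y1 = u_i / |u|\<close>, \<open>y2 = v_i / |v|\<close>, \<open>t = - w_i / |w|\<close> one has \<open>|w| t = |u| y1 + |v| y2\<close>, and
  \<open>|u| |v| |w| p_i = t^m (|v| y1^m + |u| y2^m) - |w| y1^m y2^m\<close>. Factoring \<open>t^(m+1) - y^(m+1)\<close> and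
  using the triangle inequality shows that this is nonnegative, and bounded below by
  \<open>(|u| + |v| - |w|) y2^m t^(m+1) + |v| (t - y2) t^m (y1^m - y2^m)\<close>.

  If some side has an \<open>i\<close>-th component of at least half the longest side, then \<open>t \<ge> 1/2\<close> and
  \<open>y1 \<ge> 1/4\<close>, and the lower bound is at least a multiple of \<open>\<Delta>\<^sup>2 / (|u| |v| |w|)\<close>, where
  \<open>\<Delta> = u_1 v_2 - u_2 v_1\<close>, because \<open>\<Delta>\<^sup>2 \<le> (|u| + |v| - |w|) (|u| + |v| + |w|) |u| |v|\<close> and
  \<open>\<Delta>\<^sup>2 \<le> |u| |v|\<^sup>2 |w|\<close>. As the circumradius is \<open>|u| |v| |w| / (2 |\<Delta>|)\<close>, this gives
  \<open>p_i \<ge> c(z1, z2, z3)\<^sup>2 / (24 \<cdot> 16^m)\<close>; for \<open>i = 1\<close> or \<open>i = 2\<close> such a long component exists, and the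
  other \<open>p_i\<close> is nonnegative.\<close>

lemma sum3_eq_0_imp_eq_neg: "u + v + w = 0 \<Longrightarrow> w = - (u + v)" for u v w :: "'a::ab_group_add"
  by (simp add: add_eq_0_iff2 add.commute)

definition cross2 :: "real^2 \<Rightarrow> real^2 \<Rightarrow> real" where
  "cross2 a b = a$1 * b$2 - a$2 * b$1"

lemma inner_vec2: "a \<bullet> b = a$1 * b$1 + a$2 * b$2" for a b :: "real^2"
  by (simp add: inner_vec_def sum_2)

lemma power2_norm_vec2: "(norm x)\<^sup>2 = (x$1)\<^sup>2 + (x$2)\<^sup>2" for x :: "real^2"
  by (simp add: norm_vec_def L2_set_def sum_2)

lemma cross2_minus: "cross2 (-a) (-b) = cross2 a b"
  by (simp add: cross2_def)

lemma cross2_sq_add_inner_sq: "(cross2 a b)\<^sup>2 + (a \<bullet> b)\<^sup>2 = (norm a * norm b)\<^sup>2"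
  unfolding power_mult_distrib power2_norm_vec2
  by (simp add: cross2_def inner_vec2 power2_eq_square algebra_simps)

lemma abs_cross2_le: "\<bar>cross2 a b\<bar> \<le> norm a * norm b"
proof (rule power2_le_imp_le)
  show "\<bar>cross2 a b\<bar>\<^sup>2 \<le> (norm a * norm b)\<^sup>2"
    using cross2_sq_add_inner_sq[of a b] zero_le_power2[of "a \<bullet> b"] by (simp only: power2_abs)
qed simp

lemma cross2_sq_le:
  "(cross2 a b)\<^sup>2 \<le> (norm a + norm b - norm (a + b)) * (norm a + norm b + norm (a + b)) * norm a * norm b"
proof -
  define p where "p = a \<bullet> b"
  have "(norm a + norm b - norm (a + b)) * (norm a + norm b + norm (a + b)) = 2 * (norm a * norm b - p)"
    by (simp add: p_def algebra_simps power2_eq_square[symmetric] power2_norm_eq_inner inner_add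
        inner_commute)
  moreover have "(cross2 a b)\<^sup>2 = (norm a * norm b - p) * (norm a * norm b + p)"
    using cross2_sq_add_inner_sq[of a b] by (simp add: p_def algebra_simps power2_eq_square)
  moreover have "(norm a * norm b - p) * (norm a * norm b + p) \<le> (norm a * norm b - p) * (2 * (norm a * norm b))"
    using Cauchy_Schwarz_ineq2[of a b] by (intro mult_left_mono) (auto simp: p_def)
  ultimately show ?thesis by (simp add: mult_ac)
qed

lemma triangle_cross2_sq_le:
  assumes "u + v + w = 0"
  shows "(cross2 u v)\<^sup>2 \<le> (norm u + norm v - norm w) * (norm u + norm v + norm w) * norm u * norm v"
    and "(cross2 u v)\<^sup>2 \<le> norm u * norm v * (norm v * norm w)"
proof -
  have w: "w = - (u + v)"
    using sum3_eq_0_imp_eq_neg[OF assms] .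
  then have "norm w = norm (u + v)"
    by (simp only: norm_minus_cancel)
  then show "(cross2 u v)\<^sup>2 \<le> (norm u + norm v - norm w) * (norm u + norm v + norm w) * norm u * norm v"
    using cross2_sq_le[of u v] by simp
  have "cross2 v w = cross2 u v"
    by (simp add: w cross2_def algebra_simps)
  then have "\<bar>cross2 u v\<bar> * \<bar>cross2 u v\<bar> \<le> norm u * norm v * (norm v * norm w)"
    using abs_cross2_le[of u v] abs_cross2_le[of v w] by (intro mult_mono) auto
  then show "(cross2 u v)\<^sup>2 \<le> norm u * norm v * (norm v * norm w)"
    by (simp add: power2_eq_square)
qed

lemma cross2_eq_0_iff_collinear: "cross2 a b = 0 \<longleftrightarrow> collinear {0, a, b}"
proof -
  have "cross2 a b = 0 \<longleftrightarrow> (a \<bullet> b)\<^sup>2 = (norm a * norm b)\<^sup>2"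
    using cross2_sq_add_inner_sq[of a b] by auto
  also have "\<dots> \<longleftrightarrow> \<bar>a \<bullet> b\<bar>\<^sup>2 = (norm a * norm b)\<^sup>2"
    by simp
  also have "\<dots> \<longleftrightarrow> \<bar>a \<bullet> b\<bar> = norm a * norm b"
    by (intro power2_eq_iff_nonneg) simp_all
  finally show ?thesis by (simp add: norm_cauchy_schwarz_equal)
qed

lemma exists_component_ge_half_norm: "\<exists>i. norm x \<le> 2 * \<bar>x$i\<bar>" for x :: "real^2"
proof (rule ccontr)
  assume "\<not> ?thesis"
  then have "2 * \<bar>x$1\<bar> < norm x" "2 * \<bar>x$2\<bar> < norm x"
    by (meson not_le)+
  then have "(2 * \<bar>x$1\<bar>)\<^sup>2 < (norm x)\<^sup>2" "(2 * \<bar>x$2\<bar>)\<^sup>2 < (norm x)\<^sup>2"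
    by (intro power_strict_mono; simp)+
  then have "4 * (x$1)\<^sup>2 < (norm x)\<^sup>2" "4 * (x$2)\<^sup>2 < (norm x)\<^sup>2"
    by (simp_all add: power_mult_distrib)
  then show False using power2_norm_vec2[of x] zero_le_power2[of "norm x"] by linarith
qed

lemma dist_eq_iff_inner_eq:
  fixes q a b :: "'a::real_inner"
  shows "dist q b = dist q a \<longleftrightarrow> 2 * ((q - a) \<bullet> (b - a)) = (norm (b - a))\<^sup>2"
proof -
  have "dist q b = dist q a \<longleftrightarrow> (norm ((q - a) - (b - a)))\<^sup>2 = (norm (q - a))\<^sup>2"
    by (simp add: dist_norm power2_eq_iff_nonneg)
  then show ?thesis
    by (auto simp: power2_norm_eq_inner inner_diff inner_commute algebra_simps)
qed

text \<open>By \<open>dist_eq_iff_inner_eq\<close>, the two equations say that \<open>p\<close> is equidistant from \<open>0\<close>, \<open>b\<close>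
  and \<open>c\<close>; solving them by Cramer's rule gives the circumradius.\<close>

lemma circumradius_sq:
  fixes p b c :: "real^2"
  assumes "2 * (p \<bullet> b) = (norm b)\<^sup>2" "2 * (p \<bullet> c) = (norm c)\<^sup>2"
  shows "(norm p * (2 * cross2 b c))\<^sup>2 = (norm b * norm c * norm (b - c))\<^sup>2"
proof -
  define B C where "B = (norm b)\<^sup>2" and "C = (norm c)\<^sup>2"
  have p1: "p$1 * (2 * cross2 b c) = c$2 * B - b$2 * C"
    and p2: "p$2 * (2 * cross2 b c) = b$1 * C - c$1 * B"
    unfolding B_def C_def assms[symmetric] by (simp_all add: inner_vec2 cross2_def algebra_simps)
  have "(norm p * (2 * cross2 b c))\<^sup>2 = (p$1 * (2 * cross2 b c))\<^sup>2 + (p$2 * (2 * cross2 b c))\<^sup>2"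
    by (simp add: power_mult_distrib power2_norm_vec2 algebra_simps)
  also have "\<dots> = (c$2 * B - b$2 * C)\<^sup>2 + (b$1 * C - c$1 * B)\<^sup>2"
    by (simp only: p1 p2)
  also have "\<dots> = B * C * (norm (b - c))\<^sup>2"
    unfolding B_def C_def power2_norm_vec2 by (simp add: power2_eq_square algebra_simps)
  finally show ?thesis by (simp add: B_def C_def power_mult_distrib)
qed

lemma circumcenter_exists:
  fixes b c :: "real^2"
  assumes "cross2 b c \<noteq> 0"
  shows "\<exists>p. 2 * (p \<bullet> b) = (norm b)\<^sup>2 \<and> 2 * (p \<bullet> c) = (norm c)\<^sup>2"
proof -
  define B C where "B = (norm b)\<^sup>2" and "C = (norm c)\<^sup>2"
  define q :: "real^2" where "q = vector [c$2 * B - b$2 * C, b$1 * C - c$1 * B]"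
  have "q \<bullet> b = B * cross2 b c" "q \<bullet> c = C * cross2 b c"
    by (simp_all add: q_def inner_vec2 cross2_def algebra_simps)
  then have "2 * ((q /\<^sub>R (2 * cross2 b c)) \<bullet> b) = B \<and> 2 * ((q /\<^sub>R (2 * cross2 b c)) \<bullet> c) = C"
    using assms by simp
  then show ?thesis unfolding B_def C_def ..
qed

lemma menger_curv_eq:
  assumes "\<not> collinear {z1, z2, z3}"
  shows "menger_curv z1 z2 z3
    = 2 * \<bar>cross2 (z1 - z2) (z2 - z3)\<bar> / (norm (z1 - z2) * norm (z2 - z3) * norm (z3 - z1))"
proof -
  define b c where "b = z2 - z1" and "c = z3 - z1"
  have cross_eq: "cross2 b c = cross2 (z1 - z2) (z2 - z3)"
    by (simp add: b_def c_def cross2_def algebra_simps)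
  have "\<not> collinear {0, b, c}"
    using assms collinear_3[of z2 z1 z3] by (simp add: b_def c_def insert_commute)
  then have cross: "cross2 b c \<noteq> 0"
    by (simp add: cross2_eq_0_iff_collinear)
  define R where "R = norm b * norm c * norm (b - c) / (2 * \<bar>cross2 b c\<bar>)"
  have equidistant_iff: "dist q z2 = dist q z1 \<and> dist q z3 = dist q z1 \<longleftrightarrow>
      2 * ((q - z1) \<bullet> b) = (norm b)\<^sup>2 \<and> 2 * ((q - z1) \<bullet> c) = (norm c)\<^sup>2" for q
    by (simp add: b_def c_def dist_eq_iff_inner_eq)
  have radius: "r = R" if "dist q z1 = r" "dist q z2 = r" "dist q z3 = r" for q r
  proof -
    have "(norm (q - z1) * (2 * cross2 b c))\<^sup>2 = (norm b * norm c * norm (b - c))\<^sup>2"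
      using that equidistant_iff[of q] by (intro circumradius_sq) auto
    then have "(r * (2 * \<bar>cross2 b c\<bar>))\<^sup>2 = (norm b * norm c * norm (b - c))\<^sup>2"
      using that(1) by (simp add: dist_norm power_mult_distrib)
    moreover have "0 \<le> r"
      using that(1) by auto
    ultimately have "r * (2 * \<bar>cross2 b c\<bar>) = norm b * norm c * norm (b - c)"
      by (subst (asm) power2_eq_iff_nonneg) auto
    then show ?thesis
      using cross by (simp add: R_def field_simps)
  qed
  obtain p where "2 * (p \<bullet> b) = (norm b)\<^sup>2" "2 * (p \<bullet> c) = (norm c)\<^sup>2"
    using circumcenter_exists[OF cross] by blast
  then have "dist (z1 + p) z2 = dist (z1 + p) z1 \<and> dist (z1 + p) z3 = dist (z1 + p) z1"
    using equidistant_iff[of "z1 + p"] by simp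
  then have "\<exists>q. dist q z1 = R \<and> dist q z2 = R \<and> dist q z3 = R"
    using radius by metis
  then have "(THE r. \<exists>q. dist q z1 = r \<and> dist q z2 = r \<and> dist q z3 = r) = R"
    using radius by (intro the_equality) auto
  moreover have "norm b = norm (z1 - z2)" "norm c = norm (z3 - z1)" "norm (b - c) = norm (z2 - z3)"
    by (simp_all add: b_def c_def norm_minus_commute)
  ultimately show ?thesis
    using assms by (simp add: menger_curv_def R_def cross_eq mult_ac)
qed

lemma weighted_mean_ge:
  fixes y1 y2 t L1 L2 L3 :: real
  assumes "0 \<le> y2" "y2 \<le> y1" "0 \<le> L1" "0 \<le> L2" "0 < L3" "L3 \<le> L1 + L2"
    and "L3 * t = L1 * y1 + L2 * y2"
  shows "y2 \<le> t"
proof -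
  have "L3 * y2 \<le> (L1 + L2) * y2"
    using assms by (intro mult_right_mono) auto
  also have "\<dots> \<le> L3 * t"
    using assms by (simp add: distrib_right mult_left_mono)
  finally show ?thesis
    using assms(5) by simp
qed

lemma power_diff_sum_cross_ge:
  fixes y1 y2 t :: real
  assumes "0 \<le> y2" "y2 \<le> y1" "0 \<le> t"
  shows "y1^m * (\<Sum>i<Suc m. y2^(m - i) * t^i) - y2^m * (\<Sum>i<Suc m. y1^(m - i) * t^i)
    \<ge> t^m * (y1^m - y2^m)"
proof -
  have term_nonneg: "0 \<le> t^i * (y1^m * y2^(m - i) - y2^m * y1^(m - i))" if "i \<le> m" for i
  proof -
    have "y1^m * y2^(m - i) - y2^m * y1^(m - i) = (y1 * y2)^(m - i) * (y1^i - y2^i)"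
      using that by (simp add: power_mult_distrib algebra_simps flip: power_add)
    moreover have "y2^i \<le> y1^i"
      using assms by (simp add: power_mono)
    ultimately show ?thesis
      using assms by simp
  qed
  have "y1^m * (\<Sum>i<Suc m. y2^(m - i) * t^i) - y2^m * (\<Sum>i<Suc m. y1^(m - i) * t^i)
      = (\<Sum>i<m. t^i * (y1^m * y2^(m - i) - y2^m * y1^(m - i))) + t^m * (y1^m - y2^m)"
    by (simp add: sum_distrib_left sum_subtractf algebra_simps)
  moreover have "0 \<le> (\<Sum>i<m. t^i * (y1^m * y2^(m - i) - y2^m * y1^(m - i)))"
    using term_nonneg by (intro sum_nonneg) auto
  ultimately show ?thesis by simp
qed

text \<open>In the variables \<open>y1 = x1 / L1\<close>, \<open>y2 = x2 / L2\<close>, \<open>t = - x3 / L3\<close> of a triangle with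
  sides \<open>L1, L2, L3\<close> and \<open>i\<close>-th components \<open>x1 + x2 + x3 = 0\<close>, the expression
  \<open>t^m * (L2 * y1^m + L1 * y2^m) - L3 * y1^m * y2^m\<close> is \<open>L1 * L2 * L3\<close> times the kernel energy.\<close>

lemma normalized_energy_numerator_ge:
  fixes y1 y2 t L1 L2 L3 :: real
  assumes y: "0 \<le> y2" "y2 \<le> y1" "y2 \<le> t" and L: "0 \<le> L1" "0 \<le> L2" "L3 \<le> L1 + L2"
    and rel: "L3 * t = L1 * y1 + L2 * y2"
  shows "t * (t^m * (L2 * y1^m + L1 * y2^m) - L3 * y1^m * y2^m)
    \<ge> (L1 + L2 - L3) * y2^m * t^(m+1) + L2 * (t - y2) * t^m * (y1^m - y2^m)"
proof -
  define S1 S2 where "S1 = (\<Sum>i<Suc m. y1^(m - i) * t^i)" and "S2 = (\<Sum>i<Suc m. y2^(m - i) * t^i)"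
  have t: "0 \<le> t" using y by linarith
  have S: "t^(m+1) - y1^(m+1) = (t - y1) * S1" "t^(m+1) - y2^(m+1) = (t - y2) * S2"
    unfolding S1_def S2_def using power_diff_sumr2[of t "Suc m"] by simp_all
  have L1_gap: "L1 * (t - y1) = (L1 + L2 - L3) * t - L2 * (t - y2)"
    using rel by (simp add: algebra_simps)
  have "t * (t^m * (L2 * y1^m + L1 * y2^m) - L3 * y1^m * y2^m)
      = t^(m+1) * (L2 * y1^m + L1 * y2^m) - y1^m * y2^m * (L3 * t)"
    by (simp add: algebra_simps)
  also have "\<dots> = L2 * y1^m * (t^(m+1) - y2^(m+1)) + y2^m * (L1 * (t^(m+1) - y1^(m+1)))"
    unfolding rel by (simp add: algebra_simps)
  also have "\<dots> = L2 * y1^m * ((t - y2) * S2) + y2^m * S1 * (L1 * (t - y1))"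
    unfolding S by (simp add: mult_ac)
  also have "\<dots> = (L1 + L2 - L3) * t * y2^m * S1 + L2 * (t - y2) * (y1^m * S2 - y2^m * S1)"
    unfolding L1_gap by (simp add: algebra_simps)
  finally have "t * (t^m * (L2 * y1^m + L1 * y2^m) - L3 * y1^m * y2^m)
      = (L1 + L2 - L3) * t * y2^m * S1 + L2 * (t - y2) * (y1^m * S2 - y2^m * S1)" .
  moreover have "S1 \<ge> t^m"
    using sum_nonneg[of "{..<m}" "\<lambda>i. y1^(m - i) * t^i"] y t unfolding S1_def by simp
  then have "(L1 + L2 - L3) * t * y2^m * t^m \<le> (L1 + L2 - L3) * t * y2^m * S1"
    using L y t by (intro mult_left_mono) auto
  then have "(L1 + L2 - L3) * t * y2^m * S1 \<ge> (L1 + L2 - L3) * y2^m * t^(m+1)"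
    by (simp add: mult_ac)
  moreover have "L2 * (t - y2) * (y1^m * S2 - y2^m * S1) \<ge> L2 * (t - y2) * t^m * (y1^m - y2^m)"
    using power_diff_sum_cross_ge[OF y(1,2) t, of m] L y
    unfolding S1_def S2_def by (simp add: mult_left_mono mult.assoc)
  ultimately show ?thesis by linarith
qed

lemma power_gap_lower_bound:
  fixes y1 y2 t :: real
  assumes y: "0 \<le> y2" "y2 \<le> y1" "y2 \<le> t" and large: "1/2 \<le> t" "1/4 \<le> y1" and m: "1 \<le> m"
  shows "t / (6 * 16^m) \<le> y2^m * t^(m+1) / 6 + (t - y2) * t^m * (y1^m - y2^m)"
proof -
  have first: "0 \<le> y2^m * t^(m+1) / 6" and second: "0 \<le> (t - y2) * t^m * (y1^m - y2^m)"
    using y large by (simp_all add: power_mono)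
  have pow16: "1 / 16^m \<le> a^m * b^m" if "1/16 \<le> a * b" for a b :: real
    using power_mono[OF that, of m] by (simp add: power_divide power_mult_distrib)
  show ?thesis
  proof (cases "1/8 \<le> y2")
    case True
    then have "1/16 \<le> y2 * t"
      using mult_mono[of "1/8" y2 "1/2" t] large by simp
    then have "t / (6 * 16^m) \<le> y2^m * t^(m+1) / 6"
      using pow16[of y2 t] large by (simp add: field_simps)
    then show ?thesis
      using second by linarith
  next
    case False
    then have small: "y2 \<le> y1 / 2" "y2 \<le> t / 2"
      using large by linarith+
    have "y2^m \<le> y1^m / 2^m"
      using power_mono[OF small(1) y(1)] by (simp add: power_divide)
    also have "\<dots> \<le> y1^m / 2"
      using m y by (intro divide_left_mono) (auto simp: order_trans[OF _ self_le_power])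
    finally have "y1^m / 2 \<le> y1^m - y2^m" by simp
    then have "(t / 2) * t^m * (y1^m / 2) \<le> (t - y2) * t^m * (y1^m - y2^m)"
      using small y large by (intro mult_mono) auto
    moreover have "1/16 \<le> t * y1"
      using mult_mono[of "1/2" t "1/4" y1] large by simp
    then have "t / (6 * 16^m) \<le> (t / 2) * t^m * (y1^m / 2)"
      using pow16[of t y1] large by (simp add: field_simps)
    ultimately show ?thesis
      using first by linarith
  qed
qed

lemma normalized_energy_nonneg:
  fixes y1 y2 t L1 L2 L3 :: real
  assumes y: "0 \<le> y2" "y2 \<le> y1" and L: "0 \<le> L1" "0 \<le> L2" "0 < L3" "L3 \<le> L1 + L2"
    and rel: "L3 * t = L1 * y1 + L2 * y2" and m: "1 \<le> m"
  shows "0 \<le> t^m * (L2 * y1^m + L1 * y2^m) - L3 * y1^m * y2^m"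
proof -
  have "y2 \<le> t"
    using weighted_mean_ge[OF y L rel] .
  show ?thesis
  proof (cases "t = 0")
    case True
    then show ?thesis
      using \<open>y2 \<le> t\<close> y m by (simp add: power_0_left)
  next
    case False
    have "0 \<le> (L1 + L2 - L3) * y2^m * t^(m+1) + L2 * (t - y2) * t^m * (y1^m - y2^m)"
      using y L \<open>y2 \<le> t\<close> by (simp add: power_mono)
    also have "\<dots> \<le> t * (t^m * (L2 * y1^m + L1 * y2^m) - L3 * y1^m * y2^m)"
      using normalized_energy_numerator_ge y L rel \<open>y2 \<le> t\<close> by blast
    finally show ?thesis
      using False \<open>y2 \<le> t\<close> y by (simp add: zero_le_mult_iff)
  qed
qed

lemma normalized_energy_ge:
  fixes y1 y2 t L1 L2 L3 Q :: real
  assumes y: "0 \<le> y2" "y2 \<le> y1" and large: "1/2 \<le> t" "1/4 \<le> y1" and m: "1 \<le> m"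
    and L: "0 \<le> L1" "0 < L3" and Q: "0 \<le> Q" "Q \<le> 6 * (L1 + L2 - L3)" "Q \<le> L2"
    and rel: "L3 * t = L1 * y1 + L2 * y2"
  shows "Q / (6 * 16^m) \<le> t^m * (L2 * y1^m + L1 * y2^m) - L3 * y1^m * y2^m"
proof -
  have L2: "0 \<le> L2" "L3 \<le> L1 + L2"
    using Q by (auto simp: algebra_simps)
  have y2t: "y2 \<le> t"
    using weighted_mean_ge[OF y L(1) L2(1) L(2) L2(2) rel] .
  have gap_nonneg: "0 \<le> (t - y2) * t^m * (y1^m - y2^m)"
    using y y2t large by (simp add: power_mono)
  have "t * (Q / (6 * 16^m)) = Q * (t / (6 * 16^m))"
    by simp
  also have "\<dots> \<le> Q * (y2^m * t^(m+1) / 6 + (t - y2) * t^m * (y1^m - y2^m))"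
    using power_gap_lower_bound[OF y y2t large m] Q by (intro mult_left_mono) auto
  also have "\<dots> = Q / 6 * (y2^m * t^(m+1)) + Q * ((t - y2) * t^m * (y1^m - y2^m))"
    by (simp add: algebra_simps)
  also have "\<dots> \<le> (L1 + L2 - L3) * (y2^m * t^(m+1)) + L2 * ((t - y2) * t^m * (y1^m - y2^m))"
    using Q y large gap_nonneg by (intro add_mono mult_right_mono) auto
  also have "\<dots> \<le> t * (t^m * (L2 * y1^m + L1 * y2^m) - L3 * y1^m * y2^m)"
    using normalized_energy_numerator_ge[OF y y2t L(1) L2 rel] by (simp add: mult.assoc)
  finally show ?thesis
    by (rule mult_left_le_imp_le) (use large in linarith)
qed

lemma Kern_minus: "1 \<le> n \<Longrightarrow> Kern n i (- x) = - Kern n i x"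
  by (simp add: Kern_def)

lemma Kern_eq_normalized: "1 \<le> n \<Longrightarrow> Kern n i x = (x$i / norm x)^(2*n-1) / norm x"
proof -
  assume "1 \<le> n"
  then have "2 * n = Suc (2 * n - 1)" by simp
  then show ?thesis
    unfolding Kern_def by (metis divide_divide_eq_left power_Suc2 power_divide)
qed

definition kernel_energy :: "nat \<Rightarrow> 2 \<Rightarrow> real^2 \<Rightarrow> real^2 \<Rightarrow> real^2 \<Rightarrow> real" where
  "kernel_energy n i u v w = - (Kern n i u * Kern n i v + Kern n i v * Kern n i w + Kern n i w * Kern n i u)"

lemma pK_eq_kernel_energy:
  "1 \<le> n \<Longrightarrow> pK n i z1 z2 z3 = kernel_energy n i (z1 - z2) (z2 - z3) (z3 - z1)"
  using Kern_minus[of n i "z1 - z2"] Kern_minus[of n i "z2 - z3"] Kern_minus[of n i "z3 - z1"]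
  by (simp add: pK_def kernel_energy_def algebra_simps)

lemma kernel_energy_swap12: "kernel_energy n i v u w = kernel_energy n i u v w"
  by (simp add: kernel_energy_def algebra_simps)

lemma kernel_energy_swap23: "kernel_energy n i u w v = kernel_energy n i u v w"
  by (simp add: kernel_energy_def algebra_simps)

lemma kernel_energy_minus: "1 \<le> n \<Longrightarrow> kernel_energy n i (- u) (- v) (- w) = kernel_energy n i u v w"
  by (simp add: kernel_energy_def Kern_minus)

lemma kernel_energy_mult_norms:
  fixes u v w :: "real^2" and n :: nat and i :: 2
  defines "m \<equiv> 2 * n - 1" and "y1 \<equiv> u$i / norm u" and "y2 \<equiv> v$i / norm v" and "t \<equiv> - w$i / norm w"
  assumes n: "1 \<le> n" and nz: "u \<noteq> 0" "v \<noteq> 0" "w \<noteq> 0"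
  shows "kernel_energy n i u v w * (norm u * norm v * norm w)
    = t^m * (norm v * y1^m + norm u * y2^m) - norm w * y1^m * y2^m"
proof -
  have "odd m" using n by (simp add: m_def)
  then have Kw: "Kern n i w = - (t^m / norm w)"
    using Kern_eq_normalized[OF n, of i w] by (simp add: m_def t_def power_minus_odd)
  have Ku: "Kern n i u = y1^m / norm u" and Kv: "Kern n i v = y2^m / norm v"
    using Kern_eq_normalized[OF n] by (simp_all add: m_def y1_def y2_def)
  have identity: "- (a / L1 * (b / L2) + b / L2 * - (c / L3) + - (c / L3) * (a / L1)) * (L1 * L2 * L3)
      = c * (L2 * a + L1 * b) - L3 * a * b" if "L1 \<noteq> 0" "L2 \<noteq> 0" "L3 \<noteq> 0" for a b c L1 L2 L3 :: real
    using that by (simp add: field_simps)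
  show ?thesis
    unfolding kernel_energy_def Ku Kv Kw by (rule identity) (use nz in simp_all)
qed

definition has_long_component :: "2 \<Rightarrow> real^2 \<Rightarrow> real^2 \<Rightarrow> real^2 \<Rightarrow> bool" where
  "has_long_component i u v w \<longleftrightarrow>
     (\<exists>x\<in>{u, v, w}. max (norm u) (max (norm v) (norm w)) \<le> 2 * \<bar>x$i\<bar>)"

lemma has_long_component_swap12: "has_long_component i v u w = has_long_component i u v w"
  by (simp add: has_long_component_def max.left_commute insert_commute)

lemma has_long_component_swap23: "has_long_component i u w v = has_long_component i u v w"
  by (simp add: has_long_component_def max.commute insert_commute)

lemma has_long_component_minus:
  "has_long_component i (- u) (- v) (- w) = has_long_component i u v w"
  by (simp add: has_long_component_def)

lemma exists_long_component: "\<exists>i. has_long_component i u v w"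
proof -
  obtain x where x: "x \<in> {u, v, w}" "norm x = max (norm u) (max (norm v) (norm w))"
    by (metis insertCI max_def)
  obtain i where "norm x \<le> 2 * \<bar>x$i\<bar>"
    using exists_component_ge_half_norm by blast
  then show ?thesis
    using x by (auto simp: has_long_component_def)
qed

lemma has_long_component_imp_max_norm_le:
  assumes "u + v + w = 0" "0 \<le> u$i" "0 \<le> v$i" "has_long_component i u v w"
  shows "max (norm u) (max (norm v) (norm w)) \<le> 2 * (- w$i)"
proof -
  obtain x where x: "x \<in> {u, v, w}" "max (norm u) (max (norm v) (norm w)) \<le> 2 * \<bar>x$i\<bar>"
    using assms(4) unfolding has_long_component_def by blast
  have "- w$i = u$i + v$i"
    using sum3_eq_0_imp_eq_neg[OF assms(1)] by simp
  then have "\<bar>x$i\<bar> \<le> - w$i"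
    using x(1) assms(2,3) by auto
  then show ?thesis
    using x(2) by linarith
qed

lemma ordered_triangle_normalized:
  fixes u v w :: "real^2" and i :: 2
  defines "y1 \<equiv> u$i / norm u" and "y2 \<equiv> v$i / norm v" and "t \<equiv> - w$i / norm w"
  assumes sum: "u + v + w = 0" and nz: "u \<noteq> 0" "v \<noteq> 0" "w \<noteq> 0"
    and sign: "0 \<le> u$i" "0 \<le> v$i" and ord: "v$i * norm u \<le> u$i * norm v"
  shows "0 \<le> y2" "y2 \<le> y1" "norm w * t = norm u * y1 + norm v * y2" "norm w \<le> norm u + norm v"
proof -
  show "0 \<le> y2" "y2 \<le> y1"
    using sign ord nz by (simp_all add: y1_def y2_def divide_simps mult.commute)
  have w: "w = - (u + v)"
    using sum3_eq_0_imp_eq_neg[OF sum] .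
  show "norm w * t = norm u * y1 + norm v * y2"
    using nz by (simp add: t_def y1_def y2_def w)
  show "norm w \<le> norm u + norm v"
    unfolding w norm_minus_cancel by (rule norm_triangle_ineq)
qed

lemma kernel_energy_nonneg_ordered:
  assumes n: "1 \<le> n" and sum: "u + v + w = 0" and nz: "u \<noteq> 0" "v \<noteq> 0" "w \<noteq> 0"
    and sign: "0 \<le> u$i" "0 \<le> v$i" and ord: "v$i * norm u \<le> u$i * norm v"
  shows "0 \<le> kernel_energy n i u v w"
proof -
  define m y1 y2 t where "m = 2 * n - 1" and "y1 = u$i / norm u" and "y2 = v$i / norm v"
    and "t = - w$i / norm w"
  note tri = ordered_triangle_normalized[OF sum nz sign ord, folded y1_def y2_def t_def]
  have "1 \<le> m"
    using n by (simp add: m_def)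
  then have "0 \<le> kernel_energy n i u v w * (norm u * norm v * norm w)"
    unfolding kernel_energy_mult_norms[OF n nz, of i, folded m_def y1_def y2_def t_def]
    using normalized_energy_nonneg[OF tri(1,2) _ _ _ tri(4,3)] nz by simp
  moreover have "0 < norm u * norm v * norm w"
    using nz by simp
  ultimately show ?thesis
    by (simp add: zero_le_mult_iff)
qed

lemma long_component_normalized_bounds:
  fixes u v w :: "real^2" and i :: 2
  defines "y1 \<equiv> u$i / norm u" and "t \<equiv> - w$i / norm w"
  assumes sum: "u + v + w = 0" and nz: "u \<noteq> 0" "v \<noteq> 0" "w \<noteq> 0"
    and sign: "0 \<le> u$i" "0 \<le> v$i" and ord: "v$i * norm u \<le> u$i * norm v"
    and long: "has_long_component i u v w"
  shows "1/2 \<le> t" "1/4 \<le> y1" "norm u + norm v + norm w \<le> 6 * norm w"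
proof -
  define y2 Lmax where "y2 = v$i / norm v" and "Lmax = max (norm u) (max (norm v) (norm w))"
  note tri = ordered_triangle_normalized[OF sum nz sign ord, folded y1_def y2_def t_def]
  have norms: "norm u \<le> Lmax" "norm v \<le> Lmax" "norm w \<le> Lmax" "0 < norm u" "0 < norm w"
    using nz by (simp_all add: Lmax_def)
  have Lmax: "Lmax \<le> 2 * (norm w * t)"
    using has_long_component_imp_max_norm_le[OF sum sign long] nz by (simp add: Lmax_def t_def)
  have "norm w * t \<le> norm w"
    using component_le_norm_cart[of w i] nz by (simp add: t_def)
  then show "norm u + norm v + norm w \<le> 6 * norm w"
    using Lmax norms by linarith
  have "norm w * (1/2) \<le> norm w * t"
    using Lmax norms by linarith
  then show "1/2 \<le> t"
    using norms(5) by (rule mult_left_le_imp_le)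
  have "norm v * y2 \<le> norm v * y1"
    using tri by (intro mult_left_mono) auto
  moreover have "(norm u + norm v) * y1 \<le> (2 * Lmax) * y1"
    using tri norms by (intro mult_right_mono) auto
  then have "norm u * y1 + norm v * y1 \<le> 2 * (Lmax * y1)"
    by (simp only: distrib_right mult.assoc)
  ultimately have "Lmax * (1/4) \<le> Lmax * y1"
    using Lmax tri(3) by linarith
  then show "1/4 \<le> y1"
    by (rule mult_left_le_imp_le) (use norms in linarith)
qed

lemma kernel_energy_ge_ordered:
  assumes n: "1 \<le> n" and sum: "u + v + w = 0" and nz: "u \<noteq> 0" "v \<noteq> 0" "w \<noteq> 0"
    and sign: "0 \<le> u$i" "0 \<le> v$i" and ord: "v$i * norm u \<le> u$i * norm v"
    and long: "has_long_component i u v w"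
  shows "(cross2 u v)\<^sup>2 / (6 * 16^(2*n-1) * (norm u * norm v * norm w)\<^sup>2) \<le> kernel_energy n i u v w"
proof -
  define m y1 y2 t where "m = 2 * n - 1" and "y1 = u$i / norm u" and "y2 = v$i / norm v"
    and "t = - w$i / norm w"
  define P Q where "P = norm u * norm v * norm w" and "Q = (cross2 u v)\<^sup>2 / P"
  note tri = ordered_triangle_normalized[OF sum nz sign ord, folded y1_def y2_def t_def]
  note large = long_component_normalized_bounds[OF sum nz sign ord long, folded y1_def t_def]
  have P: "0 < P" using nz by (simp add: P_def)
  have "(norm u + norm v - norm w) * (norm u + norm v + norm w) * norm u * norm v
      \<le> (norm u + norm v - norm w) * (6 * norm w) * norm u * norm v"
    using large(3) tri(4) by (intro mult_right_mono mult_left_mono) auto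
  also have "\<dots> = 6 * (norm u + norm v - norm w) * P"
    by (simp add: P_def mult_ac)
  finally have "Q \<le> 6 * (norm u + norm v - norm w)"
    using triangle_cross2_sq_le(1)[OF sum] by (simp add: Q_def pos_divide_le_eq[OF P])
  moreover have "Q \<le> norm v"
    unfolding Q_def pos_divide_le_eq[OF P] using triangle_cross2_sq_le(2)[OF sum]
    by (simp add: P_def mult_ac)
  moreover have "0 \<le> Q"
    using P by (simp add: Q_def)
  moreover have "1 \<le> m"
    using n by (simp add: m_def)
  ultimately have "Q / (6 * 16^m) \<le> kernel_energy n i u v w * P"
    unfolding P_def kernel_energy_mult_norms[OF n nz, of i, folded m_def y1_def y2_def t_def]
    using normalized_energy_ge[OF tri(1,2) large(1,2) _ _ _ _ _ _ tri(3)] nz by simp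
  then have "Q / (6 * 16^m) / P \<le> kernel_energy n i u v w"
    by (subst pos_divide_le_eq[OF P])
  moreover have "Q / (6 * 16^m) / P = (cross2 u v)\<^sup>2 / (6 * 16^(2*n-1) * (norm u * norm v * norm w)\<^sup>2)"
    by (simp add: Q_def P_def m_def power2_eq_square mult_ac)
  ultimately show ?thesis
    by simp
qed

lemma sum_zero_wlog_nonneg_pair:
  fixes P :: "real^'n \<Rightarrow> real^'n \<Rightarrow> real^'n \<Rightarrow> bool" and i :: 'n
  assumes sum: "u + v + w = 0"
    and swap12: "\<And>a b c. a + b + c = 0 \<Longrightarrow> P a b c \<Longrightarrow> P b a c"
    and swap23: "\<And>a b c. a + b + c = 0 \<Longrightarrow> P a b c \<Longrightarrow> P a c b"
    and minus: "\<And>a b c. a + b + c = 0 \<Longrightarrow> P (- a) (- b) (- c) \<Longrightarrow> P a b c"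
    and nonneg: "\<And>a b c. a + b + c = 0 \<Longrightarrow> 0 \<le> a$i \<Longrightarrow> 0 \<le> b$i \<Longrightarrow> P a b c"
  shows "P u v w"
proof -
  have same_sign: "P a b c" if abc: "a + b + c = 0" and "0 \<le> a$i \<and> 0 \<le> b$i \<or> a$i \<le> 0 \<and> b$i \<le> 0"
    for a b c
    using that(2)
  proof
    assume "0 \<le> a$i \<and> 0 \<le> b$i"
    then show ?thesis
      using nonneg abc by blast
  next
    assume "a$i \<le> 0 \<and> b$i \<le> 0"
    moreover have "- a + - b + - c = - (a + b + c)"
      by (simp add: algebra_simps)
    ultimately have "P (- a) (- b) (- c)"
      using abc by (intro nonneg) auto
    then show ?thesis
      using minus abc by blast
  qed
  have "u$i + v$i + w$i = 0"
    using arg_cong[where f = "\<lambda>x. x$i", OF sum] by simp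
  then consider "0 \<le> u$i \<and> 0 \<le> v$i \<or> u$i \<le> 0 \<and> v$i \<le> 0"
    | "0 \<le> u$i \<and> 0 \<le> w$i \<or> u$i \<le> 0 \<and> w$i \<le> 0"
    | "0 \<le> v$i \<and> 0 \<le> w$i \<or> v$i \<le> 0 \<and> w$i \<le> 0"
    by linarith
  then show ?thesis
  proof cases
    case 1
    then show ?thesis
      using same_sign sum by blast
  next
    case 2
    have "u + w + v = 0"
      using sum by (simp add: ac_simps)
    then show ?thesis
      using swap23[OF _ same_sign[OF _ 2]] by simp
  next
    case 3
    have vwu: "v + w + u = 0" and vuw: "v + u + w = 0"
      using sum by (simp_all add: ac_simps)
    then have "P v u w"
      using swap23[OF vwu same_sign[OF vwu 3]] by simp
    then show ?thesis
      using swap12[OF vuw] by simp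
  qed
qed

lemma kernel_energy_bounds:
  assumes n: "1 \<le> n" and sum: "u + v + w = 0" and nz: "u \<noteq> 0" "v \<noteq> 0" "w \<noteq> 0"
  shows "0 \<le> kernel_energy n i u v w \<and>
    (has_long_component i u v w \<longrightarrow>
      (cross2 u v)\<^sup>2 / (6 * 16^(2*n-1) * (norm u * norm v * norm w)\<^sup>2) \<le> kernel_energy n i u v w)"
proof -
  define P where "P a b c \<longleftrightarrow> a \<noteq> 0 \<longrightarrow> b \<noteq> 0 \<longrightarrow> c \<noteq> 0 \<longrightarrow>
    0 \<le> kernel_energy n i a b c \<and>
    (has_long_component i a b c \<longrightarrow>
      (cross2 a b)\<^sup>2 / (6 * 16^(2*n-1) * (norm a * norm b * norm c)\<^sup>2) \<le> kernel_energy n i a b c)"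
    for a b c
  have swap12: "P b a c" if "P a b c" for a b c
  proof -
    have "(cross2 b a)\<^sup>2 = (cross2 a b)\<^sup>2"
      by (simp add: cross2_def power2_eq_square algebra_simps)
    then show ?thesis
      using that by (simp add: P_def kernel_energy_swap12 has_long_component_swap12 mult_ac)
  qed
  have "P u v w"
  proof (rule sum_zero_wlog_nonneg_pair[OF sum swap12])
    show "P a c b" if "a + b + c = 0" "P a b c" for a b c
    proof -
      have "cross2 a c = - cross2 a b"
        unfolding sum3_eq_0_imp_eq_neg[OF that(1)] by (simp add: cross2_def algebra_simps)
      then show ?thesis
        using that(2) by (simp add: P_def kernel_energy_swap23 has_long_component_swap23 mult_ac)
    qed
    show "P a b c" if "P (- a) (- b) (- c)" for a b c
      using that by (simp add: P_def kernel_energy_minus[OF n] has_long_component_minus cross2_minus)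
    have ordered: "P a b c" if "a + b + c = 0" "0 \<le> a$i" "0 \<le> b$i" "b$i * norm a \<le> a$i * norm b"
      for a b c
      using that kernel_energy_nonneg_ordered[OF n] kernel_energy_ge_ordered[OF n] by (simp add: P_def)
    show "P a b c" if "a + b + c = 0" "0 \<le> a$i" "0 \<le> b$i" for a b c
    proof (cases "b$i * norm a \<le> a$i * norm b")
      case True
      then show ?thesis using ordered that by blast
    next
      case False
      have "b + a + c = 0"
        using that(1) by (simp add: ac_simps)
      then have "P b a c"
        using ordered False that(2,3) by simp
      then show ?thesis
        using swap12 by blast
    qed
  qed
  then show ?thesis
    using nz by (simp add: P_def)
qed

lemma menger_curv_sq_le_pK_sum:
  assumes n: "1 \<le> n" and distinct: "z1 \<noteq> z2" "z1 \<noteq> z3" "z2 \<noteq> z3"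
  shows "1 / (24 * 16^(2*n-1)) * (menger_curv z1 z2 z3)\<^sup>2 \<le> pK n 1 z1 z2 z3 + pK n 2 z1 z2 z3"
proof -
  define u v w where "u = z1 - z2" and "v = z2 - z3" and "w = z3 - z1"
  have bounds: "0 \<le> pK n j z1 z2 z3 \<and> (has_long_component j u v w \<longrightarrow>
      (cross2 u v)\<^sup>2 / (6 * 16^(2*n-1) * (norm u * norm v * norm w)\<^sup>2) \<le> pK n j z1 z2 z3)" for j
    using kernel_energy_bounds[OF n, of u v w j] distinct
    by (simp add: pK_eq_kernel_energy[OF n] u_def v_def w_def)
  show ?thesis
  proof (cases "collinear {z1, z2, z3}")
    case True
    then show ?thesis
      using bounds[of 1] bounds[of 2] by (simp add: menger_curv_def)
  next
    case False
    obtain j where long: "has_long_component j u v w"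
      using exists_long_component by blast
    have "1 / (24 * 16^(2*n-1)) * (menger_curv z1 z2 z3)\<^sup>2
        = (cross2 u v)\<^sup>2 / (6 * 16^(2*n-1) * (norm u * norm v * norm w)\<^sup>2)"
      using menger_curv_eq[OF False] by (simp add: u_def v_def w_def power_divide power_mult_distrib)
    then show ?thesis
      using bounds[of 1] bounds[of 2] long exhaust_2[of j] by fastforce
  qed
qed

theorem lemma2p1:
  fixes n :: nat
  assumes "n \<ge> 1"
  shows "\<exists>c1 > 0. \<forall>z1 z2 z3 :: real^2. z1 \<noteq> z2 \<and> z1 \<noteq> z3 \<and> z2 \<noteq> z3 \<longrightarrow>
           pK n 1 z1 z2 z3 + pK n 2 z1 z2 z3 \<ge> c1 * (menger_curv z1 z2 z3)^2"
  using menger_curv_sq_le_pK_sum[OF assms]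
  by (intro exI[where x = "1 / (24 * 16^(2*n-1))"]) simp

end
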